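(* Let $(X,d)$ be a compact metric space, $\mathbb{F}=\{f_n:n\in\mathbb{N}\}$ a sequence of continuous surjective self-maps of $X$, and $k\in\mathbb{N}$. If $(X,\mathbb{F})$ is syndetically (resp. cofinitely) sensitive then $(X,\mathbb{F}_k)$ is syndetically (resp. cofinitely) sensitive. If the family $\mathbb{F}$ is feeble open, then $(X,\mathbb{F}_k)$ syndetically (resp. cofinitely) sensitive implies $(X,\mathbb{F})$ syndetically (resp. cofinitely) sensitive.
   Context: Write $\omega_n=f_n\circ\cdots\circ f_1$ and, for $n>k$, $\omega^k_n=f_n\circ\cdots\circ f_{k+1}$; $\mathbb{F}_k=\{f_n:n\ge k+1\}$ is the truncated family. $(X,\mathbb{F})$ is syndetically sensitive if there is $\delta>0$ such that for every non-empty open $U$ the set $\{n\in\mathbb{N}:\mathrm{diam}(\omega_n(U))>\delta\}$ is syndetic (has bounded gaps); it is cofinitely sensitive if there is $\delta>0$ such that for every non-empty open $U$ there is $K$ with $\mathrm{diam}(\omega_n(U))>\delta$ for all $n\ge K$. The same notions for $(X,\mathbb{F}_k)$ use $\omega^k_n$ ($n>k$). $\mathbb{F}$ is feeble open if for every non-empty open $U$ and every $f\in\mathbb{F}$, $f(U)$ has non-empty interior. *)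

theory Defs
  imports "HOL-Analysis.Analysis"
begin

text \<open>The family is indexed from 1: f 1, f 2, ... (the value f 0 is never used).
  omega f k n = f n o ... o f (k+1) for n > k, and the identity for n \<le> k.
  omega f 0 n is the full composition f n o ... o f 1.\<close>
fun omega :: "(nat \<Rightarrow> 'a \<Rightarrow> 'a) \<Rightarrow> nat \<Rightarrow> nat \<Rightarrow> 'a \<Rightarrow> 'a" where
  "omega f k 0 = id"
| "omega f k (Suc n) = (if Suc n \<le> k then id else f (Suc n) \<circ> omega f k n)"

definition syndetic :: "nat set \<Rightarrow> bool" where
  "syndetic S \<longleftrightarrow> (\<exists>M. \<forall>n. \<exists>m\<in>S. n \<le> m \<and> m \<le> n + M)"

definition synd_sensitive :: "'a::metric_space set \<Rightarrow> (nat \<Rightarrow> 'a \<Rightarrow> 'a) \<Rightarrow> nat \<Rightarrow> bool" where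
  "synd_sensitive X f k \<longleftrightarrow> (\<exists>\<delta>>0. \<forall>U. openin (top_of_set X) U \<and> U \<noteq> {} \<longrightarrow>
      syndetic {n. k < n \<and> diameter (omega f k n ` U) > \<delta>})"

definition cofin_sensitive :: "'a::metric_space set \<Rightarrow> (nat \<Rightarrow> 'a \<Rightarrow> 'a) \<Rightarrow> nat \<Rightarrow> bool" where
  "cofin_sensitive X f k \<longleftrightarrow> (\<exists>\<delta>>0. \<forall>U. openin (top_of_set X) U \<and> U \<noteq> {} \<longrightarrow>
      (\<exists>K. \<forall>n. K \<le> n \<and> k < n \<longrightarrow> diameter (omega f k n ` U) > \<delta>))"

definition feeble_open :: "'a::metric_space set \<Rightarrow> (nat \<Rightarrow> 'a \<Rightarrow> 'a) \<Rightarrow> bool" where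
  "feeble_open X f \<longleftrightarrow> (\<forall>U n. openin (top_of_set X) U \<and> U \<noteq> {} \<and> 1 \<le> n \<longrightarrow>
      (top_of_set X) interior_of (f n ` U) \<noteq> {})"

end

theory Submission
  imports Defs
begin

text \<open>Write \<open>g = \<omega>\<^sub>k\<close> for the first \<open>k\<close> maps, so that \<open>\<omega>\<^sub>n = \<omega>\<^sup>k\<^sub>n \<circ> g\<close> for \<open>n > k\<close>.
  Going from \<open>\<FF>\<close> to \<open>\<FF>\<^sub>k\<close>: a nonempty open \<open>U\<close> pulls back under the continuous
  surjection \<open>g\<close> to a nonempty open \<open>V\<close> with \<open>g(V) \<subseteq> U\<close>, so \<open>\<omega>\<^sub>n(V) \<subseteq> \<omega>\<^sup>k\<^sub>n(U)\<close> and every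
  large diameter for \<open>V\<close> is one for \<open>U\<close>. Going back: if the family is feeble open, \<open>g(U)\<close>
  contains a nonempty open \<open>W\<close>, and \<open>\<omega>\<^sup>k\<^sub>n(W) \<subseteq> \<omega>\<^sub>n(U)\<close>. In both directions the set of
  times with diameter \<open>> \<delta>\<close> only grows, up to finitely many initial times, which neither
  syndeticity nor cofiniteness notices.\<close>

lemma syndetic_mono: "syndetic S \<Longrightarrow> S \<subseteq> T \<Longrightarrow> syndetic T"
  unfolding syndetic_def by blast

lemma syndetic_Int_greaterThan:
  assumes "syndetic S" shows "syndetic {n \<in> S. k < n}"
proof -
  obtain M where M: "\<forall>n. \<exists>m\<in>S. n \<le> m \<and> m \<le> n + M"
    using assms unfolding syndetic_def by auto
  show ?thesis unfolding syndetic_def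
  proof (intro exI allI)
    fix n
    obtain m where "m \<in> S" "n + k + 1 \<le> m" "m \<le> n + k + 1 + M" using M by blast
    then show "\<exists>m\<in>{n \<in> S. k < n}. n \<le> m \<and> m \<le> n + (k + 1 + M)" by auto
  qed
qed

lemma omega_self [simp]: "omega f k k = id"
  by (cases k) simp_all

lemma omega_split:
  assumes "j \<le> k" "k \<le> n"
  shows "omega f j n = omega f k n \<circ> omega f j k"
  using assms(2)
proof (induction n)
  case 0 then show ?case by simp
next
  case (Suc n)
  show ?case
  proof (cases "k = Suc n")
    case False
    with Suc.prems assms(1) show ?thesis by (simp add: Suc.IH comp_assoc)
  qed simp
qed

lemma omega_Suc_image:
  "omega f k (Suc n) ` A = (if Suc n \<le> k then A else f (Suc n) ` omega f k n ` A)"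
  by (simp add: image_comp)

lemma omega_image_subset:
  assumes "\<And>n. 1 \<le> n \<Longrightarrow> f n ` X \<subseteq> X"
  shows "omega f k n ` X \<subseteq> X"
proof (induction n)
  case (Suc n)
  then show ?case using assms[of "Suc n"] by (auto simp: omega_Suc_image simp del: omega.simps)
qed simp

lemma omega_image_eq:
  assumes "\<And>n. 1 \<le> n \<Longrightarrow> f n ` X = X"
  shows "omega f k n ` X = X"
proof (induction n)
  case (Suc n)
  then show ?case using assms[of "Suc n"] by (simp add: omega_Suc_image del: omega.simps)
qed simp

lemma continuous_on_omega:
  assumes "\<And>n. 1 \<le> n \<Longrightarrow> continuous_on X (f n)"
    and "\<And>n. 1 \<le> n \<Longrightarrow> f n ` X \<subseteq> X"
  shows "continuous_on X (omega f k n)"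
proof (induction n)
  case (Suc n)
  have "omega f k n ` X \<subseteq> X" using assms(2) by (rule omega_image_subset)
  then have "continuous_on (omega f k n ` X) (f (Suc n))"
    by (intro continuous_on_subset[OF assms(1)]) simp_all
  with Suc.IH have "continuous_on X (f (Suc n) \<circ> omega f k n)"
    by (rule continuous_on_compose)
  then show ?case by simp
qed simp

lemma diameter_omega_image_mono:
  assumes "bounded X" "\<And>n. 1 \<le> n \<Longrightarrow> f n ` X \<subseteq> X" "A \<subseteq> B" "B \<subseteq> X"
  shows "diameter (omega f k n ` A) \<le> diameter (omega f k n ` B)"
proof (rule diameter_subset)
  have "omega f k n ` B \<subseteq> omega f k n ` X" using assms(4) by (rule image_mono)
  also have "\<dots> \<subseteq> X" using assms(2) by (rule omega_image_subset)
  finally show "bounded (omega f k n ` B)" using assms(1) by (rule bounded_subset[rotated])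
  show "omega f k n ` A \<subseteq> omega f k n ` B" using assms(3) by (rule image_mono)
qed

lemma feeble_open_omega_image:
  assumes "feeble_open X f" "openin (top_of_set X) U" "U \<noteq> {}"
  shows "\<exists>W. openin (top_of_set X) W \<and> W \<noteq> {} \<and> W \<subseteq> omega f k n ` U"
proof (induction n)
  case (Suc n)
  then obtain W where W: "openin (top_of_set X) W" "W \<noteq> {}" "W \<subseteq> omega f k n ` U"
    by blast
  show ?case
  proof (cases "Suc n \<le> k")
    case True
    with assms(2,3) show ?thesis by auto
  next
    case False
    let ?W' = "top_of_set X interior_of (f (Suc n) ` W)"
    have "?W' \<noteq> {}" using assms(1) W(1,2) unfolding feeble_open_def by auto
    moreover have "?W' \<subseteq> f (Suc n) ` omega f k n ` U"
      by (meson W(3) image_mono interior_of_subset order_trans)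
    with False have "?W' \<subseteq> omega f k (Suc n) ` U"
      by (simp add: omega_Suc_image del: omega.simps)
    ultimately show ?thesis by (meson openin_interior_of)
  qed
qed (use assms(2,3) in auto)

definition diameters_dominate ::
    "'a::metric_space set \<Rightarrow> (nat \<Rightarrow> 'a \<Rightarrow> 'a) \<Rightarrow> nat \<Rightarrow> (nat \<Rightarrow> 'a \<Rightarrow> 'a) \<Rightarrow> nat \<Rightarrow> bool" where
  "diameters_dominate X g i f j \<longleftrightarrow>
    (\<forall>U. openin (top_of_set X) U \<and> U \<noteq> {} \<longrightarrow>
      (\<exists>V. openin (top_of_set X) V \<and> V \<noteq> {} \<and>
        (\<forall>n. max i j < n \<longrightarrow> diameter (omega f j n ` V) \<le> diameter (omega g i n ` U))))"

lemma synd_sensitive_transfer: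
  assumes "synd_sensitive X f j"
    and "diameters_dominate X g i f j"
  shows "synd_sensitive X g i"
proof -
  obtain \<delta> where \<delta>: "\<delta> > 0" "\<And>V. openin (top_of_set X) V \<and> V \<noteq> {} \<Longrightarrow>
      syndetic {n. j < n \<and> diameter (omega f j n ` V) > \<delta>}"
    using assms(1) unfolding synd_sensitive_def by blast
  have "syndetic {n. i < n \<and> diameter (omega g i n ` U) > \<delta>}"
    if U: "openin (top_of_set X) U" "U \<noteq> {}" for U
  proof -
    obtain V where V: "openin (top_of_set X) V" "V \<noteq> {}"
      "\<And>n. max i j < n \<Longrightarrow> diameter (omega f j n ` V) \<le> diameter (omega g i n ` U)"
      using assms(2) U unfolding diameters_dominate_def by blast
    have "syndetic {n \<in> {n. j < n \<and> diameter (omega f j n ` V) > \<delta>}. i < n}"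
      using syndetic_Int_greaterThan \<delta>(2) V(1,2) by blast
    moreover have "{n \<in> {n. j < n \<and> diameter (omega f j n ` V) > \<delta>}. i < n}
        \<subseteq> {n. i < n \<and> diameter (omega g i n ` U) > \<delta>}"
      using V(3) by fastforce
    ultimately show ?thesis by (rule syndetic_mono)
  qed
  with \<delta>(1) show ?thesis unfolding synd_sensitive_def by blast
qed

lemma cofin_sensitive_transfer:
  assumes "cofin_sensitive X f j"
    and "diameters_dominate X g i f j"
  shows "cofin_sensitive X g i"
proof -
  obtain \<delta> where \<delta>: "\<delta> > 0" "\<And>V. openin (top_of_set X) V \<and> V \<noteq> {} \<Longrightarrow>
      \<exists>K. \<forall>n. K \<le> n \<and> j < n \<longrightarrow> diameter (omega f j n ` V) > \<delta>"
    using assms(1) unfolding cofin_sensitive_def by blast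
  have "\<exists>K. \<forall>n. K \<le> n \<and> i < n \<longrightarrow> diameter (omega g i n ` U) > \<delta>"
    if U: "openin (top_of_set X) U" "U \<noteq> {}" for U
  proof -
    obtain V where V: "openin (top_of_set X) V" "V \<noteq> {}"
      "\<And>n. max i j < n \<Longrightarrow> diameter (omega f j n ` V) \<le> diameter (omega g i n ` U)"
      using assms(2) U unfolding diameters_dominate_def by blast
    obtain K where K: "\<And>n. K \<le> n \<and> j < n \<Longrightarrow> diameter (omega f j n ` V) > \<delta>"
      using \<delta>(2) V(1,2) by blast
    have "diameter (omega g i n ` U) > \<delta>" if "max K (Suc j) \<le> n" "i < n" for n
      using K[of n] V(3)[of n] that by fastforce
    then show ?thesis by blast
  qed
  with \<delta>(1) show ?thesis unfolding cofin_sensitive_def by blast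
qed

lemma diameters_dominate_pullback:
  assumes "bounded X" "j \<le> k"
    and "\<And>n. 1 \<le> n \<Longrightarrow> continuous_on X (f n)" "\<And>n. 1 \<le> n \<Longrightarrow> f n ` X = X"
  shows "diameters_dominate X f k f j"
  unfolding diameters_dominate_def
proof (intro allI impI)
  fix U assume "openin (top_of_set X) U \<and> U \<noteq> {}"
  then have U_open: "openin (top_of_set X) U" and "U \<noteq> {}" by blast+
  have "U \<subseteq> X" using U_open by (rule openin_imp_subset)
  let ?g = "omega f j k"
  have maps_into: "\<And>n. 1 \<le> n \<Longrightarrow> f n ` X \<subseteq> X" using assms(4) by simp
  have onto: "?g ` X = X" using omega_image_eq[OF assms(4)] .
  define V where "V = X \<inter> ?g -` U"
  have "continuous_on X ?g" using assms(3) maps_into by (rule continuous_on_omega)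
  moreover have "?g \<in> X \<rightarrow> X" using onto by (simp add: image_subset_iff_funcset[symmetric])
  ultimately have "openin (top_of_set X) V"
    unfolding V_def using U_open by (rule continuous_openin_preimage)
  moreover have "V \<noteq> {}"
  proof -
    obtain u where "u \<in> U" using \<open>U \<noteq> {}\<close> by blast
    then have "u \<in> ?g ` X" unfolding onto using \<open>U \<subseteq> X\<close> by blast
    then obtain x where "x \<in> X" "?g x = u" by blast
    with \<open>u \<in> U\<close> show ?thesis unfolding V_def by blast
  qed
  moreover have "diameter (omega f j n ` V) \<le> diameter (omega f k n ` U)" if "max k j < n" for n
  proof -
    have "omega f j n ` V = omega f k n ` ?g ` V"
      using omega_split[OF assms(2), of n f] that by (simp add: image_comp)
    moreover have "?g ` V \<subseteq> U" unfolding V_def by blast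
    ultimately show ?thesis
      using diameter_omega_image_mono[OF assms(1) maps_into _ \<open>U \<subseteq> X\<close>] by simp
  qed
  ultimately show "\<exists>V. openin (top_of_set X) V \<and> V \<noteq> {} \<and>
      (\<forall>n. max k j < n \<longrightarrow> diameter (omega f j n ` V) \<le> diameter (omega f k n ` U))"
    by blast
qed

lemma diameters_dominate_pushforward:
  assumes "bounded X" "j \<le> k" "feeble_open X f"
    and "\<And>n. 1 \<le> n \<Longrightarrow> f n ` X \<subseteq> X"
  shows "diameters_dominate X f j f k"
  unfolding diameters_dominate_def
proof (intro allI impI)
  fix U assume "openin (top_of_set X) U \<and> U \<noteq> {}"
  then have U_open: "openin (top_of_set X) U" and "U \<noteq> {}" by blast+
  let ?g = "omega f j k"
  obtain W where W: "openin (top_of_set X) W" "W \<noteq> {}" "W \<subseteq> ?g ` U"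
    using feeble_open_omega_image[OF assms(3) U_open \<open>U \<noteq> {}\<close>] by blast
  have "U \<subseteq> X" using U_open by (rule openin_imp_subset)
  then have "?g ` U \<subseteq> ?g ` X" by (rule image_mono)
  also have "\<dots> \<subseteq> X" using assms(4) by (rule omega_image_subset)
  finally have "?g ` U \<subseteq> X" .
  then have "diameter (omega f k n ` W) \<le> diameter (omega f j n ` U)" if "max j k < n" for n
    using diameter_omega_image_mono[OF assms(1,4) W(3)] omega_split[OF assms(2), of n f] that
    by (simp add: image_comp)
  with W(1,2) show "\<exists>W. openin (top_of_set X) W \<and> W \<noteq> {} \<and>
      (\<forall>n. max j k < n \<longrightarrow> diameter (omega f k n ` W) \<le> diameter (omega f j n ` U))"
    by blast
qed

theorem mainTheorem7:
  fixes X :: "'a::metric_space set" and f :: "nat \<Rightarrow> 'a \<Rightarrow> 'a" and k :: nat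
  assumes "compact X"
    and "\<And>n. 1 \<le> n \<Longrightarrow> continuous_on X (f n)"
    and "\<And>n. 1 \<le> n \<Longrightarrow> f n ` X = X"
  shows "(synd_sensitive X f 0 \<longrightarrow> synd_sensitive X f k)
       \<and> (cofin_sensitive X f 0 \<longrightarrow> cofin_sensitive X f k)
       \<and> (feeble_open X f \<longrightarrow>
            (synd_sensitive X f k \<longrightarrow> synd_sensitive X f 0)
          \<and> (cofin_sensitive X f k \<longrightarrow> cofin_sensitive X f 0))"
proof -
  have bounded: "bounded X" using assms(1) by (rule compact_imp_bounded)
  have maps_into: "\<And>n. 1 \<le> n \<Longrightarrow> f n ` X \<subseteq> X" using assms(3) by simp
  have pullback: "diameters_dominate X f k f 0"
    using diameters_dominate_pullback[OF bounded _ assms(2,3)] by simp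
  have pushforward: "diameters_dominate X f 0 f k" if "feeble_open X f"
    using diameters_dominate_pushforward[OF bounded _ that maps_into] by simp
  show ?thesis
    using synd_sensitive_transfer[OF _ pullback] cofin_sensitive_transfer[OF _ pullback]
      synd_sensitive_transfer[OF _ pushforward] cofin_sensitive_transfer[OF _ pushforward]
    by blast
qed

end
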